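(* Let $S$ be the vertex set of an acute $0/1$-simplex in $[0,1]^n$ with $k\leq n$ vertices, and let $m\geq1$. Regard $[0,1]^n$ as the facet of $[0,1]^{n+m}$ consisting of points whose last $m$ coordinates vanish, so that $S$ is also the vertex set of an acute $0/1$-simplex in $[0,1]^{n+m}$. Then $$\mathcal{C}^{n+m}(S)=\left\{\begin{bmatrix}v\\ w\end{bmatrix}: v\in\mathcal{C}^n(S),\ w\in\{0,1\}^m\right\},\qquad \mathcal{A}^{n+m}(S)\supseteq\left\{\begin{bmatrix}v\\ w\end{bmatrix}: v\in\mathcal{A}^n(S),\ w\in\{0,1\}^m\right\}.$$ Moreover, for each $v\in\mathcal{C}^n(S)$ there exists an integer $\ell$ such that, for $w\in\{0,1\}^m$ (with $m$ large enough), $w^\top w\geq\ell$ if and only if $\begin{bmatrix}v\\ w\end{bmatrix}\in\mathcal{A}^{n+m}(S)$.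
   Context: A set of $j+1$ affinely independent points $a_0,\dots,a_j\in\{0,1\}^N$ is the vertex set of an acute $0/1$-$j$-simplex if all dihedral angles of their convex hull are acute; equivalently, with $P=[a_1-a_0,\dots,a_j-a_0]$ and $G=P^\top P$, every off-diagonal entry of $G^{-1}$ is negative and every row sum of $G^{-1}$ is positive. For the vertex set $S\subseteq\{0,1\}^N$ of an acute $0/1$-simplex: the set of acute extensions $\mathcal{A}^N(S)$ consists of all $v\in\{0,1\}^N$ such that $S\cup\{v\}$ is the vertex set of an acute $0/1$-simplex with one more vertex; the set of candidate acute extensions $\mathcal{C}^N(S)$ consists of all $v\in\{0,1\}^N$ whose orthogonal projection onto the affine hull of $S$ lies in the (relative) interior of the convex hull of $S$. *)

theory Defs
  imports Complex_Main
begin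

text \<open>Points of R^N are represented as functions nat => real that vanish at all
  coordinates i >= N.  In particular [0,1]^n sits inside [0,1]^(n+m) as the facet
  where the last m coordinates vanish, without any explicit embedding map.\<close>

definition cube01 :: "nat \<Rightarrow> (nat \<Rightarrow> real) set" where
  "cube01 N = {x. (\<forall>i<N. x i = 0 \<or> x i = 1) \<and> (\<forall>i\<ge>N. x i = 0)}"

definition ip :: "nat \<Rightarrow> (nat \<Rightarrow> real) \<Rightarrow> (nat \<Rightarrow> real) \<Rightarrow> real" where
  "ip N x y = (\<Sum>i<N. x i * y i)"

definition sqdist :: "nat \<Rightarrow> (nat \<Rightarrow> real) \<Rightarrow> (nat \<Rightarrow> real) \<Rightarrow> real" where
  "sqdist N x y = ip N (\<lambda>i. x i - y i) (\<lambda>i. x i - y i)"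

definition lincomb :: "((nat \<Rightarrow> real) \<Rightarrow> real) \<Rightarrow> (nat \<Rightarrow> real) set \<Rightarrow> nat \<Rightarrow> real" where
  "lincomb c S = (\<lambda>i. \<Sum>a\<in>S. c a * a i)"

definition aff_hull :: "(nat \<Rightarrow> real) set \<Rightarrow> (nat \<Rightarrow> real) set" where
  "aff_hull S = {x. \<exists>c. sum c S = 1 \<and> x = lincomb c S}"

definition conv_hull :: "(nat \<Rightarrow> real) set \<Rightarrow> (nat \<Rightarrow> real) set" where
  "conv_hull S = {x. \<exists>c. (\<forall>a\<in>S. c a \<ge> 0) \<and> sum c S = 1 \<and> x = lincomb c S}"

definition aff_indep :: "(nat \<Rightarrow> real) set \<Rightarrow> bool" where
  "aff_indep S \<longleftrightarrow> (\<forall>c. sum c S = 0 \<and> lincomb c S = (\<lambda>i. 0) \<longrightarrow> (\<forall>a\<in>S. c a = 0))"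

definition relint_conv :: "nat \<Rightarrow> (nat \<Rightarrow> real) set \<Rightarrow> (nat \<Rightarrow> real) set" where
  "relint_conv N S = {p \<in> conv_hull S. \<exists>e>0. \<forall>y\<in>aff_hull S. sqdist N y p < e \<longrightarrow> y \<in> conv_hull S}"

definition is_proj_aff :: "nat \<Rightarrow> (nat \<Rightarrow> real) set \<Rightarrow> (nat \<Rightarrow> real) \<Rightarrow> (nat \<Rightarrow> real) \<Rightarrow> bool" where
  "is_proj_aff N S v p \<longleftrightarrow> p \<in> aff_hull S \<and> (\<forall>y\<in>aff_hull S. sqdist N v p \<le> sqdist N v y)"

text \<open>Acute 0/1-simplex, via the Gram-matrix criterion: with a0 a vertex,
  P = [a_1 - a0, ..., a_j - a0], G = P^T P, the inverse H of G has negative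
  off-diagonal entries and positive row sums.\<close>
definition acute_simplex :: "nat \<Rightarrow> (nat \<Rightarrow> real) set \<Rightarrow> bool" where
  "acute_simplex N S \<longleftrightarrow> finite S \<and> S \<noteq> {} \<and> S \<subseteq> cube01 N \<and> aff_indep S \<and>
     (\<exists>a0\<in>S. \<exists>H :: (nat \<Rightarrow> real) \<Rightarrow> (nat \<Rightarrow> real) \<Rightarrow> real.
        let T = S - {a0};
            G = (\<lambda>x y. ip N (\<lambda>i. x i - a0 i) (\<lambda>i. y i - a0 i))
        in (\<forall>x\<in>T. \<forall>y\<in>T. (\<Sum>z\<in>T. G x z * H z y) = (if x = y then 1 else 0)) \<and>
           (\<forall>x\<in>T. \<forall>y\<in>T. (\<Sum>z\<in>T. H x z * G z y) = (if x = y then 1 else 0)) \<and>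
           (\<forall>x\<in>T. \<forall>y\<in>T. x \<noteq> y \<longrightarrow> H x y < 0) \<and>
           (\<forall>x\<in>T. (\<Sum>y\<in>T. H x y) > 0))"

definition acute_ext :: "nat \<Rightarrow> (nat \<Rightarrow> real) set \<Rightarrow> (nat \<Rightarrow> real) set" where
  "acute_ext N S = {v \<in> cube01 N. v \<notin> S \<and> acute_simplex N (insert v S)}"

definition cand_ext :: "nat \<Rightarrow> (nat \<Rightarrow> real) set \<Rightarrow> (nat \<Rightarrow> real) set" where
  "cand_ext N S = {v \<in> cube01 N. \<exists>p. is_proj_aff N S v p \<and> p \<in> relint_conv N S}"

definition stack :: "nat \<Rightarrow> (nat \<Rightarrow> real) \<Rightarrow> (nat \<Rightarrow> real) \<Rightarrow> nat \<Rightarrow> real" where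
  "stack n v w = (\<lambda>i. if i < n then v i else w (i - n))"

end

theory Submission
  imports Defs
begin

text \<open>An acute simplex is characterised by its dual family, the gradients \<open>g x\<close> of the
  barycentric coordinates: the simplex is acute iff \<open>\<langle>g x, g y\<rangle> < 0\<close> for all \<open>x \<noteq> y\<close>.
  Let a new vertex \<open>u\<close> have foot \<open>p = \<Sum> \<mu> a \<cdot> a\<close> on the affine hull and squared height
  \<open>s = |u - p|\<^sup>2 > 0\<close>. The dual family of the extended simplex is \<open>(u - p)/s\<close> together with
  \<open>g a - (\<mu> a/s)(u - p)\<close>, whose Gram entries are \<open>-\<mu> a/s\<close> and \<open>\<langle>g a, g b\<rangle> + \<mu> a \<mu> b/s\<close>.
  So \<open>u\<close> is an acute extension iff all \<open>\<mu> a > 0\<close> (the foot lies in the relative interior)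
  and \<open>\<langle>g a, g b\<rangle> + \<mu> a \<mu> b/s < 0\<close> for \<open>a \<noteq> b\<close>. Stacking \<open>w\<close> under \<open>v\<close> leaves the foot
  unchanged and adds the integer \<open>|w|\<^sup>2\<close> to \<open>s\<close>; the criterion is monotone in \<open>s\<close> and holds
  for large \<open>s\<close>, which gives all three claims.\<close>

section \<open>Inner products of coordinate vectors\<close>

lemma ip_commute: "ip N x y = ip N y x"
  by (simp add: ip_def mult.commute)

lemma ip_diff_right: "ip N x (\<lambda>i. y i - z i) = ip N x y - ip N x z"
  by (simp add: ip_def right_diff_distrib sum_subtractf)

lemma ip_add_right: "ip N x (\<lambda>i. y i + z i) = ip N x y + ip N x z"
  by (simp add: ip_def distrib_left sum.distrib)

lemma ip_scale_right: "ip N x (\<lambda>i. r * y i) = r * ip N x y"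
  by (simp add: ip_def sum_distrib_left algebra_simps)

lemma ip_sum_right: "ip N x (\<lambda>i. \<Sum>a\<in>A. f a i) = (\<Sum>a\<in>A. ip N x (f a))"
  by (simp add: ip_def sum_distrib_left sum.swap[of _ A])

lemma ip_add_left: "ip N (\<lambda>i. y i + z i) x = ip N y x + ip N z x"
  by (metis ip_commute ip_add_right)

lemma ip_scale_left: "ip N (\<lambda>i. r * y i) x = r * ip N y x"
  by (metis ip_commute ip_scale_right)

lemma ip_sum_left: "ip N (\<lambda>i. \<Sum>a\<in>A. f a i) x = (\<Sum>a\<in>A. ip N (f a) x)"
  by (simp add: ip_def sum_distrib_right sum.swap[of _ A])

lemma ip_lincomb_right: "ip N x (lincomb c S) = (\<Sum>a\<in>S. c a * ip N x a)"
  unfolding lincomb_def ip_sum_right by (simp add: ip_scale_right)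

lemma ip_self_nonneg: "ip N x x \<ge> 0"
  by (simp add: ip_def sum_nonneg)

lemma ip_self_eq_0D: "ip N x x = 0 \<Longrightarrow> i < N \<Longrightarrow> x i = 0"
  unfolding ip_def by (subst (asm) sum_nonneg_eq_0_iff) auto

lemma ip_eq_0_if_self_eq_0: "ip N x x = 0 \<Longrightarrow> ip N x y = 0"
  using ip_self_eq_0D[of N x] unfolding ip_def[of N x y] by (auto intro!: sum.neutral)

lemma ip_self_add_scaled:
  "ip N (\<lambda>i. x i + r * y i) (\<lambda>i. x i + r * y i) = ip N x x + 2 * r * ip N x y + r\<^sup>2 * ip N y y"
proof -
  have "ip N (\<lambda>i. x i + r * y i) (\<lambda>i. x i + r * y i) = ip N x x + r * ip N x y + r * (ip N y x + r * ip N y y)"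
    by (simp only: ip_add_left ip_scale_left ip_add_right ip_scale_right)
  then show ?thesis
    using ip_commute[of N y x] by (simp add: algebra_simps power2_eq_square)
qed

lemma sum_lessThan_add_split: "(\<Sum>i<n+m. f i) = (\<Sum>i<n. f i) + (\<Sum>i<m. f (n+i))"
  for f :: "nat \<Rightarrow> real"
  by (induct m) (auto simp: add.assoc)

lemma ip_eq_if_vanish_left:
  assumes "\<forall>i\<ge>n. x i = 0" "n \<le> N"
  shows "ip N x y = ip n x y"
proof -
  obtain k where N: "N = n + k" using assms(2) le_Suc_ex by blast
  show ?thesis using assms(1) unfolding ip_def N sum_lessThan_add_split by simp
qed

lemma ip_eq_if_vanish_right:
  "\<forall>i\<ge>n. y i = 0 \<Longrightarrow> n \<le> N \<Longrightarrow> ip N x y = ip n x y"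
  using ip_eq_if_vanish_left ip_commute by metis

lemma ip_self_binary_nat:
  "\<forall>i<m. w i = 0 \<or> w i = 1 \<Longrightarrow> \<exists>k::nat. ip m w w = real k"
proof (induction m)
  case 0 then show ?case by (simp add: ip_def)
next
  case (Suc m)
  then obtain k where k: "ip m w w = real k" by auto
  have "w m = 0 \<or> w m = 1" using Suc.prems by simp
  then show ?case
    using k by (auto simp: ip_def intro: exI[of _ k] exI[of _ "k+1"])
qed

section \<open>Affine combinations and dual families\<close>

lemma lincomb_insert:
  "finite S \<Longrightarrow> u \<notin> S \<Longrightarrow> lincomb c (insert u S) = (\<lambda>i. c u * u i + lincomb c S i)"
  unfolding lincomb_def by (simp add: sum.insert)

lemma lincomb_add_scaled:
  "lincomb (\<lambda>z. \<mu> z + t * c z) S = (\<lambda>i. lincomb \<mu> S i + t * lincomb c S i)"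
  unfolding lincomb_def by (simp add: distrib_right sum.distrib sum_distrib_left mult.assoc)

lemma lincomb_diff: "lincomb (\<lambda>z. c z - c' z) S = (\<lambda>i. lincomb c S i - lincomb c' S i)"
  unfolding lincomb_def by (simp add: left_diff_distrib sum_subtractf)

lemma lincomb_vanish: "S \<subseteq> cube01 n \<Longrightarrow> i \<ge> n \<Longrightarrow> lincomb c S i = 0"
  unfolding lincomb_def cube01_def by (auto intro!: sum.neutral)

lemma lincomb_eq_sum_edges:
  assumes "finite S" "a0 \<in> S" "sum c S = 0"
  shows "lincomb c S = (\<lambda>i. \<Sum>z\<in>S-{a0}. c z * (z i - a0 i))"
proof
  fix i
  have ca: "c a0 = - (\<Sum>z\<in>S-{a0}. c z)"
    using assms sum.remove[of S a0 c] by simp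
  have "lincomb c S i = c a0 * a0 i + (\<Sum>z\<in>S-{a0}. c z * z i)"
    unfolding lincomb_def using assms sum.remove by fastforce
  also have "\<dots> = (\<Sum>z\<in>S-{a0}. c z * (z i - a0 i))"
    by (simp add: ca sum_distrib_right right_diff_distrib sum_subtractf)
  finally show "lincomb c S i = (\<Sum>z\<in>S-{a0}. c z * (z i - a0 i))" .
qed

lemma vertex_minus_lincomb:
  assumes "finite S" "y \<in> S"
  shows "(\<lambda>i. y i - lincomb \<mu> S i) = lincomb (\<lambda>z. (if z = y then 1 else 0) - \<mu> z) S"
proof
  fix i
  have "lincomb (\<lambda>z. (if z = y then 1 else 0) - \<mu> z) S i
      = (\<Sum>z\<in>S. if z = y then z i else 0) - lincomb \<mu> S i"
    unfolding lincomb_def sum_subtractf[symmetric] by (rule sum.cong) (auto simp: left_diff_distrib)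
  then show "y i - lincomb \<mu> S i = lincomb (\<lambda>z. (if z = y then 1 else 0) - \<mu> z) S i"
    using assms by simp
qed

lemma sum_vertex_minus_coeffs:
  fixes \<mu> :: "(nat \<Rightarrow> real) \<Rightarrow> real"
  assumes "finite S" "y \<in> S" "sum \<mu> S = 1"
  shows "sum (\<lambda>z. (if z = y then 1 else 0) - \<mu> z) S = 0"
  using assms by (simp add: sum_subtractf)

definition in_direction :: "(nat \<Rightarrow> real) set \<Rightarrow> (nat \<Rightarrow> real) \<Rightarrow> bool" where
  "in_direction S f \<longleftrightarrow> (\<exists>c. sum c S = 0 \<and> f = lincomb c S)"

lemma in_direction_diff:
  assumes "finite S" "y \<in> S" "z \<in> S"
  shows "in_direction S (\<lambda>i. y i - z i)"
  unfolding in_direction_def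
proof (intro exI conjI)
  let ?c = "\<lambda>a. (if a = y then 1 else 0) - (if a = z then 1 else (0::real))"
  show "sum ?c S = 0" using assms by (simp add: sum_subtractf)
  show "(\<lambda>i. y i - z i) = lincomb ?c S"
  proof
    fix i
    have "lincomb ?c S i = (\<Sum>a\<in>S. if a = y then a i else 0) - (\<Sum>a\<in>S. if a = z then a i else 0)"
      unfolding lincomb_def sum_subtractf[symmetric] by (rule sum.cong) auto
    then show "y i - z i = lincomb ?c S i" using assms by simp
  qed
qed

lemma in_direction_add:
  assumes "in_direction S f" "in_direction S h"
  shows "in_direction S (\<lambda>i. f i + h i)"
proof -
  obtain c d where "sum c S = 0" "f = lincomb c S" "sum d S = 0" "h = lincomb d S"
    using assms unfolding in_direction_def by blast
  then show ?thesis unfolding in_direction_def lincomb_def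
    by (intro exI[of _ "\<lambda>a. c a + d a"]) (simp add: sum.distrib distrib_right)
qed

lemma in_direction_scale:
  assumes "in_direction S f"
  shows "in_direction S (\<lambda>i. r * f i)"
proof -
  obtain c where "sum c S = 0" "f = lincomb c S"
    using assms unfolding in_direction_def by blast
  then show ?thesis unfolding in_direction_def lincomb_def
    by (intro exI[of _ "\<lambda>a. r * c a"]) (simp add: sum_distrib_left[symmetric] mult.assoc)
qed

lemma in_direction_sum:
  "finite A \<Longrightarrow> (\<And>a. a \<in> A \<Longrightarrow> in_direction S (f a)) \<Longrightarrow> in_direction S (\<lambda>i. \<Sum>a\<in>A. f a i)"
proof (induction A rule: finite_induct)
  case empty
  then show ?case unfolding in_direction_def lincomb_def by (auto intro!: exI[of _ "\<lambda>a. 0"])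
next
  case (insert x F)
  then show ?case by (simp add: in_direction_add)
qed

lemma in_direction_insert:
  assumes "finite S" "u \<notin> S" "in_direction S f"
  shows "in_direction (insert u S) f"
proof -
  from assms(3) obtain c where c: "sum c S = 0" "f = lincomb c S"
    unfolding in_direction_def by blast
  have "sum (c(u := 0)) S = sum c S" using assms by (intro sum.cong) auto
  then have "sum (c(u := 0)) (insert u S) = 0" using assms c by simp
  moreover have "lincomb (c(u := 0)) (insert u S) = lincomb c S"
    unfolding lincomb_def using assms by (auto intro!: sum.cong)
  ultimately show ?thesis unfolding in_direction_def using c by metis
qed

lemma in_direction_vanish: "in_direction S f \<Longrightarrow> S \<subseteq> cube01 n \<Longrightarrow> i \<ge> n \<Longrightarrow> f i = 0"
  unfolding in_direction_def using lincomb_vanish by blast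

lemma ip_lincomb_eq_0_if_orthogonal:
  assumes "finite S" "a0 \<in> S" "\<forall>a\<in>S. \<forall>b\<in>S. ip N x (\<lambda>i. a i - b i) = 0" "sum c S = 0"
  shows "ip N x (lincomb c S) = 0"
  using assms unfolding lincomb_eq_sum_edges[OF assms(1,2,4)]
  by (simp add: ip_sum_right ip_scale_right)

text \<open>A dual family consists of the gradients of the barycentric coordinates: \<open>g x\<close> lies in the
  direction space of the affine hull and pairs with every edge \<open>y - z\<close> to \<open>\<delta>\<^sub>x\<^sub>y - \<delta>\<^sub>x\<^sub>z\<close>.
  Its Gram matrix is the inverse of the edge Gram matrix, bordered so that rows sum to zero.\<close>

definition dual_family ::
    "nat \<Rightarrow> (nat \<Rightarrow> real) set \<Rightarrow> ((nat \<Rightarrow> real) \<Rightarrow> nat \<Rightarrow> real) \<Rightarrow> bool" where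
  "dual_family N S g \<longleftrightarrow> (\<forall>x\<in>S. in_direction S (g x)) \<and>
     (\<forall>x\<in>S. \<forall>y\<in>S. \<forall>z\<in>S.
        ip N (g x) (\<lambda>i. y i - z i) = (if x = y then 1 else 0) - (if x = z then 1 else 0))"

definition pairwise_obtuse ::
    "nat \<Rightarrow> (nat \<Rightarrow> real) set \<Rightarrow> ((nat \<Rightarrow> real) \<Rightarrow> nat \<Rightarrow> real) \<Rightarrow> bool" where
  "pairwise_obtuse N S g \<longleftrightarrow> (\<forall>x\<in>S. \<forall>y\<in>S. x \<noteq> y \<longrightarrow> ip N (g x) (g y) < 0)"

lemma dual_family_lincomb:
  "dual_family N S g \<Longrightarrow> x \<in> S \<Longrightarrow> \<exists>c. sum c S = 0 \<and> g x = lincomb c S"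
  unfolding dual_family_def in_direction_def by blast

lemma dual_family_ip_lincomb:
  assumes fin: "finite S" and dual: "dual_family N S g" and x: "x \<in> S" and c: "sum c S = 0"
  shows "ip N (g x) (lincomb c S) = c x"
proof -
  have ip_vertex: "ip N (g x) a = ip N (g x) x + (if x = a then 1 else 0) - 1" if "a \<in> S" for a
  proof -
    have "ip N (g x) (\<lambda>i. a i - x i) = (if x = a then 1 else 0) - 1"
      using dual that x unfolding dual_family_def by simp
    then show ?thesis by (simp add: ip_diff_right)
  qed
  have "ip N (g x) (lincomb c S) = (\<Sum>a\<in>S. c a * (ip N (g x) x - 1) + (if x = a then c a else 0))"
    unfolding ip_lincomb_right by (rule sum.cong) (auto simp: ip_vertex algebra_simps)
  also have "\<dots> = sum c S * (ip N (g x) x - 1) + c x"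
    using fin x by (simp add: sum.distrib sum_distrib_right)
  finally show ?thesis using c by simp
qed

lemma dual_family_gram_unique:
  assumes fin: "finite S" and g: "dual_family N S g" and h: "dual_family N S h"
    and xy: "x \<in> S" "y \<in> S"
  shows "ip N (h x) (h y) = ip N (g x) (g y)"
proof -
  obtain c where c: "sum c S = 0" "h y = lincomb c S" using dual_family_lincomb[OF h xy(2)] by blast
  obtain d where d: "sum d S = 0" "g x = lincomb d S" using dual_family_lincomb[OF g xy(1)] by blast
  have "ip N (h x) (h y) = c x" using dual_family_ip_lincomb[OF fin h xy(1) c(1)] c(2) by simp
  also have "\<dots> = ip N (h y) (g x)"
    using dual_family_ip_lincomb[OF fin g xy(1) c(1)] c(2) ip_commute by metis
  also have "\<dots> = d y" using dual_family_ip_lincomb[OF fin h xy(2) d(1)] d(2) by simp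
  also have "\<dots> = ip N (g x) (g y)"
    using dual_family_ip_lincomb[OF fin g xy(2) d(1)] d(2) ip_commute by metis
  finally show ?thesis .
qed

lemma dual_family_coeffs:
  assumes fin: "finite S" and dual: "dual_family N S g" and x: "x \<in> S"
  obtains c where "sum c S = 0" "g x = lincomb c S" "\<And>z. z \<in> S \<Longrightarrow> c z = ip N (g z) (g x)"
proof -
  obtain c where c: "sum c S = 0" "g x = lincomb c S" using dual_family_lincomb[OF dual x] by blast
  have "c z = ip N (g z) (g x)" if "z \<in> S" for z
    using dual_family_ip_lincomb[OF fin dual that c(1)] c(2) by simp
  with c that show ?thesis by blast
qed

lemma dual_family_gram_row_sum:
  assumes "finite S" "dual_family N S g" "x \<in> S"
  shows "(\<Sum>z\<in>S. ip N (g z) (g x)) = 0"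
  by (metis (no_types, lifting) assms dual_family_coeffs sum.cong)

lemma dual_family_eq_edge_sum:
  assumes fin: "finite S" and dual: "dual_family N S g" and a0: "a0 \<in> S" and y: "y \<in> S"
  shows "g y = (\<lambda>i. \<Sum>z\<in>S-{a0}. ip N (g z) (g y) * (z i - a0 i))"
proof -
  obtain c where c: "sum c S = 0" "g y = lincomb c S" "\<And>z. z \<in> S \<Longrightarrow> c z = ip N (g z) (g y)"
    using dual_family_coeffs[OF fin dual y] by blast
  have "g y = (\<lambda>i. \<Sum>z\<in>S-{a0}. c z * (z i - a0 i))"
    using c(2) lincomb_eq_sum_edges[OF fin a0 c(1)] by simp
  also have "\<dots> = (\<lambda>i. \<Sum>z\<in>S-{a0}. ip N (g z) (g y) * (z i - a0 i))"
    using c(3) by (intro ext sum.cong) auto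
  finally show ?thesis .
qed

text \<open>With \<open>P\<close> the matrix of edges \<open>z - a0\<close> and \<open>H = (P\<^sup>T P)\<^sup>-\<^sup>1\<close>, the vectors \<open>edge_dual\<close> are the
  columns of \<open>P H\<close>; the vector at \<open>a0\<close> is chosen so that the family sums to zero.\<close>

definition edge_dual ::
    "(nat \<Rightarrow> real) set \<Rightarrow> (nat \<Rightarrow> real) \<Rightarrow> ((nat \<Rightarrow> real) \<Rightarrow> (nat \<Rightarrow> real) \<Rightarrow> real)
      \<Rightarrow> (nat \<Rightarrow> real) \<Rightarrow> nat \<Rightarrow> real" where
  "edge_dual S a0 H x = (\<lambda>i. \<Sum>z\<in>S-{a0}. H x z * (z i - a0 i))"

definition inv_gram_dual ::
    "(nat \<Rightarrow> real) set \<Rightarrow> (nat \<Rightarrow> real) \<Rightarrow> ((nat \<Rightarrow> real) \<Rightarrow> (nat \<Rightarrow> real) \<Rightarrow> real)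
      \<Rightarrow> (nat \<Rightarrow> real) \<Rightarrow> nat \<Rightarrow> real" where
  "inv_gram_dual S a0 H x =
     (if x = a0 then (\<lambda>i. - (\<Sum>y\<in>S-{a0}. edge_dual S a0 H y i)) else edge_dual S a0 H x)"

lemma ip_edge_dual_left:
  "ip N (edge_dual S a0 H x) y = (\<Sum>z\<in>S-{a0}. H x z * ip N (\<lambda>i. z i - a0 i) y)"
  unfolding edge_dual_def by (simp add: ip_sum_left ip_scale_left)

context
  fixes N :: nat and S :: "(nat \<Rightarrow> real) set" and a0 :: "nat \<Rightarrow> real"
    and H :: "(nat \<Rightarrow> real) \<Rightarrow> (nat \<Rightarrow> real) \<Rightarrow> real"
  assumes fin: "finite S" and a0: "a0 \<in> S"
    and left_inverse: "\<forall>x\<in>S-{a0}. \<forall>y\<in>S-{a0}.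
      (\<Sum>z\<in>S-{a0}. H x z * ip N (\<lambda>i. z i - a0 i) (\<lambda>i. y i - a0 i)) = (if x = y then 1 else 0)"
begin

lemma inv_gram_dual_ip_edge:
  assumes x: "x \<in> S" and y: "y \<in> S"
  shows "ip N (inv_gram_dual S a0 H x) (\<lambda>i. y i - a0 i) = (if x = y then 1 else 0) - (if x = a0 then 1 else 0)"
proof -
  have edge: "ip N (edge_dual S a0 H x) (\<lambda>i. y i - a0 i) = (if x = y then 1 else 0)"
    if "x \<in> S - {a0}" "y \<in> S" for x y
  proof (cases "y = a0")
    case True
    then show ?thesis using that by (simp add: ip_edge_dual_left ip_def)
  next
    case False
    then show ?thesis using that left_inverse by (simp add: ip_edge_dual_left)
  qed
  show ?thesis
  proof (cases "x = a0")
    case True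
    have "ip N (inv_gram_dual S a0 H x) (\<lambda>i. y i - a0 i)
        = - (\<Sum>z\<in>S-{a0}. ip N (edge_dual S a0 H z) (\<lambda>i. y i - a0 i))"
      using True ip_scale_left[of N "-1" "\<lambda>i. \<Sum>z\<in>S-{a0}. edge_dual S a0 H z i"]
      by (simp add: inv_gram_dual_def ip_sum_left)
    also have "\<dots> = - (\<Sum>z\<in>S-{a0}. if z = y then 1 else 0)"
      using edge y by simp
    finally show ?thesis using True fin y by auto
  next
    case False
    then show ?thesis using edge x y by (simp add: inv_gram_dual_def)
  qed
qed

lemma inv_gram_dual_family: "dual_family N S (inv_gram_dual S a0 H)"
  unfolding dual_family_def
proof (intro conjI ballI)
  fix x assume "x \<in> S"
  have edge_dual: "in_direction S (edge_dual S a0 H y)" for y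
    unfolding edge_dual_def using fin a0
    by (intro in_direction_sum in_direction_scale in_direction_diff) auto
  have "in_direction S (\<lambda>i. (-1) * (\<Sum>y\<in>S-{a0}. edge_dual S a0 H y i))"
    using fin by (intro in_direction_scale in_direction_sum edge_dual) auto
  then show "in_direction S (inv_gram_dual S a0 H x)"
    using edge_dual by (simp add: inv_gram_dual_def)
next
  fix x y z assume xyz: "x \<in> S" "y \<in> S" "z \<in> S"
  have "ip N (inv_gram_dual S a0 H x) (\<lambda>i. y i - z i)
      = ip N (inv_gram_dual S a0 H x) (\<lambda>i. (y i - a0 i) - (z i - a0 i))" by simp
  also have "\<dots> = ip N (inv_gram_dual S a0 H x) (\<lambda>i. y i - a0 i)
      - ip N (inv_gram_dual S a0 H x) (\<lambda>i. z i - a0 i)"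
    by (rule ip_diff_right)
  finally show "ip N (inv_gram_dual S a0 H x) (\<lambda>i. y i - z i)
      = (if x = y then 1 else 0) - (if x = z then 1 else 0)"
    using inv_gram_dual_ip_edge[OF xyz(1,2)] inv_gram_dual_ip_edge[OF xyz(1,3)] by simp
qed

lemma inv_gram_dual_gram:
  assumes x: "x \<in> S - {a0}" and y: "y \<in> S"
  shows "ip N (inv_gram_dual S a0 H x) (inv_gram_dual S a0 H y)
    = (if y = a0 then - (\<Sum>z\<in>S-{a0}. H x z) else H x y)"
proof -
  let ?g = "inv_gram_dual S a0 H"
  have "ip N (?g x) (?g y) = (\<Sum>z\<in>S-{a0}. H x z * ip N (\<lambda>i. z i - a0 i) (?g y))"
    using x by (simp add: inv_gram_dual_def[of S a0 H x] ip_edge_dual_left)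
  also have "\<dots> = (\<Sum>z\<in>S-{a0}. H x z * ip N (?g y) (\<lambda>i. z i - a0 i))"
    by (simp add: ip_commute[of N _ "?g y"])
  also have "\<dots> = (\<Sum>z\<in>S-{a0}. H x z * ((if y = z then 1 else 0) - (if y = a0 then 1 else 0)))"
    using y by (intro sum.cong refl) (simp add: inv_gram_dual_ip_edge)
  also have "\<dots> = (if y = a0 then - (\<Sum>z\<in>S-{a0}. H x z) else H x y)"
  proof (cases "y = a0")
    case True
    then have "(\<Sum>z\<in>S-{a0}. H x z * ((if y = z then 1 else 0) - (if y = a0 then 1 else 0)))
        = (\<Sum>z\<in>S-{a0}. - H x z)"
      by (intro sum.cong) auto
    then show ?thesis using True by (simp add: sum_negf)
  next
    case False
    then have "(\<Sum>z\<in>S-{a0}. H x z * ((if y = z then 1 else 0) - (if y = a0 then 1 else 0)))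
        = (\<Sum>z\<in>S-{a0}. if y = z then H x z else 0)"
      by (intro sum.cong) auto
    then show ?thesis using False fin y by simp
  qed
  finally show ?thesis .
qed

end

lemma acute_simplex_obtuse_dual:
  assumes "acute_simplex N S"
  obtains g where "dual_family N S g" "pairwise_obtuse N S g"
proof -
  from assms obtain a0 H where fin: "finite S" and a0: "a0 \<in> S"
    and left_inverse: "\<forall>x\<in>S-{a0}. \<forall>y\<in>S-{a0}.
      (\<Sum>z\<in>S-{a0}. H x z * ip N (\<lambda>i. z i - a0 i) (\<lambda>i. y i - a0 i)) = (if x = y then 1 else 0)"
    and neg: "\<forall>x\<in>S-{a0}. \<forall>y\<in>S-{a0}. x \<noteq> y \<longrightarrow> H x y < 0"
    and row_pos: "\<forall>x\<in>S-{a0}. (\<Sum>y\<in>S-{a0}. H x y) > 0"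
    unfolding acute_simplex_def Let_def by blast
  let ?g = "inv_gram_dual S a0 H"
  have obtuse: "ip N (?g x) (?g y) < 0" if "x \<in> S - {a0}" "y \<in> S" "x \<noteq> y" for x y
    using inv_gram_dual_gram[OF fin a0 left_inverse that(1,2)] neg row_pos that by auto
  have "pairwise_obtuse N S ?g"
    unfolding pairwise_obtuse_def
  proof (intro ballI impI)
    fix x y assume xy: "x \<in> S" "y \<in> S" "x \<noteq> y"
    show "ip N (?g x) (?g y) < 0"
    proof (cases "x = a0")
      case True
      then show ?thesis using obtuse[of y x] xy ip_commute[of N "?g x"] by simp
    next
      case False
      then show ?thesis using obtuse xy by simp
    qed
  qed
  with inv_gram_dual_family[OF fin a0 left_inverse] that show ?thesis by blast
qed

lemma obtuse_dual_imp_acute_simplex: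
  assumes fin: "finite S" and ne: "S \<noteq> {}" and sub: "S \<subseteq> cube01 N" and ai: "aff_indep S"
    and dual: "dual_family N S g" and obtuse: "pairwise_obtuse N S g"
  shows "acute_simplex N S"
proof -
  obtain a0 where a0: "a0 \<in> S" using ne by blast
  define T where "T = S - {a0}"
  define H where "H x y = ip N (g x) (g y)" for x y
  define G where "G x y = ip N (\<lambda>i. x i - a0 i) (\<lambda>i. y i - a0 i)" for x y
  have GH: "(\<Sum>z\<in>T. G x z * H z y) = (if x = y then 1 else 0)" if "x \<in> T" "y \<in> T" for x y
  proof -
    have y: "y \<in> S" using that T_def by simp
    have "(\<Sum>z\<in>T. G x z * H z y) = ip N (\<lambda>i. x i - a0 i) (g y)"
      by (subst dual_family_eq_edge_sum[OF fin dual a0 y])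
        (simp only: ip_sum_right ip_scale_right, simp add: G_def H_def T_def mult.commute)
    also have "\<dots> = (if x = y then 1 else 0)"
      using dual y that a0 T_def unfolding dual_family_def by (auto simp: ip_commute[of N _ "g y"])
    finally show ?thesis .
  qed
  have HG: "(\<Sum>z\<in>T. H x z * G z y) = (if x = y then 1 else 0)" if "x \<in> T" "y \<in> T" for x y
  proof -
    have "(\<Sum>z\<in>T. H x z * G z y) = (\<Sum>z\<in>T. G y z * H z x)"
      unfolding H_def G_def by (intro sum.cong refl) (simp add: ip_commute mult.commute)
    then show ?thesis using GH[OF that(2,1)] by auto
  qed
  have neg: "H x y < 0" if "x \<in> T" "y \<in> T" "x \<noteq> y" for x y
    using obtuse that unfolding H_def T_def pairwise_obtuse_def by simp
  have row_pos: "(\<Sum>y\<in>T. H x y) > 0" if "x \<in> T" for x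
  proof -
    have x: "x \<in> S" "x \<noteq> a0" using that T_def by auto
    have "(\<Sum>y\<in>T. H x y) = - H a0 x"
      using dual_family_gram_row_sum[OF fin dual x(1)] sum.remove[OF fin a0, of "\<lambda>z. H z x"]
      unfolding T_def H_def by (simp add: ip_commute[of N "g x"])
    moreover have "H a0 x < 0" using obtuse a0 x unfolding H_def pairwise_obtuse_def by simp
    ultimately show ?thesis by simp
  qed
  show ?thesis
    unfolding acute_simplex_def Let_def
    by (intro conjI fin ne sub ai bexI[OF _ a0] exI[of _ H])
      (use GH HG neg row_pos in \<open>simp_all add: T_def G_def\<close>)
qed

section \<open>Acute extensions by one apex\<close>

lemma acute_simplex_iff_obtuse_dual:
  assumes "finite S" "S \<noteq> {}" "S \<subseteq> cube01 N" "aff_indep S" and dual: "dual_family N S g"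
  shows "acute_simplex N S \<longleftrightarrow> pairwise_obtuse N S g"
proof
  assume "acute_simplex N S"
  then obtain h where "dual_family N S h" "pairwise_obtuse N S h"
    by (rule acute_simplex_obtuse_dual)
  then show "pairwise_obtuse N S g"
    using dual_family_gram_unique[OF assms(1) dual] unfolding pairwise_obtuse_def by metis
qed (use assms obtuse_dual_imp_acute_simplex in blast)

text \<open>\<open>p\<close> is the foot of the perpendicular from the apex \<open>u\<close> onto the affine hull of \<open>S\<close>, with
  barycentric coordinates \<open>\<mu>\<close>, and \<open>s\<close> is the squared height.\<close>

locale apex_over_simplex =
  fixes N :: nat and S :: "(nat \<Rightarrow> real) set" and g :: "(nat \<Rightarrow> real) \<Rightarrow> nat \<Rightarrow> real"
    and \<mu> :: "(nat \<Rightarrow> real) \<Rightarrow> real" and u p d :: "nat \<Rightarrow> real" and s :: real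
  assumes finite_S: "finite S" and nonempty_S: "S \<noteq> {}" and aff_indep_S: "aff_indep S"
    and dual: "dual_family N S g"
    and bary_sum: "sum \<mu> S = 1" and foot: "p = lincomb \<mu> S"
    and height: "d = (\<lambda>i. u i - p i)"
    and height_orth: "\<forall>a\<in>S. \<forall>b\<in>S. ip N d (\<lambda>i. a i - b i) = 0"
    and height_sq: "s = ip N d d"
begin

lemma ip_height_direction: "sum c S = 0 \<Longrightarrow> ip N d (lincomb c S) = 0"
  using nonempty_S ip_lincomb_eq_0_if_orthogonal[OF finite_S _ height_orth] by blast

lemma ip_height_vertex_foot: "y \<in> S \<Longrightarrow> ip N d (\<lambda>i. y i - p i) = 0"
  using ip_height_direction[OF sum_vertex_minus_coeffs[OF finite_S _ bary_sum]]
    vertex_minus_lincomb[OF finite_S] foot by simp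

lemma ip_height_dual: "a \<in> S \<Longrightarrow> ip N d (g a) = 0"
  using dual_family_lincomb[OF dual] ip_height_direction by metis

lemma ip_dual_vertex_foot:
  "a \<in> S \<Longrightarrow> y \<in> S \<Longrightarrow> ip N (g a) (\<lambda>i. y i - p i) = (if a = y then 1 else 0) - \<mu> a"
  using dual_family_ip_lincomb[OF finite_S dual _ sum_vertex_minus_coeffs[OF finite_S _ bary_sum]]
    vertex_minus_lincomb[OF finite_S] foot by simp

text \<open>A vanishing height would make \<open>u = p\<close> an affine combination of \<open>S\<close>.\<close>

lemma height_pos_if_aff_indep_insert:
  assumes sub: "S \<subseteq> cube01 N" and u: "u \<in> cube01 N" and uS: "u \<notin> S"
    and indep: "aff_indep (insert u S)"
  shows "s > 0"
proof (rule ccontr)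
  assume "\<not> s > 0"
  then have "s = 0" using ip_self_nonneg[of N d] height_sq by simp
  then have "d i = 0" if "i < N" for i using ip_self_eq_0D[of N d i] height_sq that by simp
  moreover have "p i = 0" "u i = 0" if "i \<ge> N" for i
    using lincomb_vanish[OF sub that] foot u that unfolding cube01_def by auto
  ultimately have up: "u = p"
    using height by (intro ext) (metis eq_iff_diff_eq_0 not_le)
  define c where "c = (\<lambda>z. if z = u then 1 else - \<mu> z)"
  have "sum c S = (\<Sum>z\<in>S. - \<mu> z)" unfolding c_def using uS by (intro sum.cong) auto
  then have "sum c (insert u S) = 0"
    using finite_S uS bary_sum unfolding c_def by (simp add: sum_negf)
  moreover have "lincomb c (insert u S) = (\<lambda>i. 0)"
  proof -
    have "lincomb c S = (\<lambda>i. - p i)" unfolding foot lincomb_def c_def using uS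
      by (auto simp: sum_negf[symmetric] intro!: sum.cong)
    then show ?thesis using lincomb_insert[OF finite_S uS, of c] up unfolding c_def by simp
  qed
  ultimately have "c u = 0" using indep unfolding aff_indep_def by blast
  then show False unfolding c_def by simp
qed

end

locale pos_apex_over_simplex = apex_over_simplex +
  assumes height_pos: "s > 0"
begin

definition apex_dual :: "(nat \<Rightarrow> real) \<Rightarrow> nat \<Rightarrow> real" where
  "apex_dual x = (if x = u then (\<lambda>i. (1/s) * d i) else (\<lambda>i. g x i + (- \<mu> x / s) * d i))"

text \<open>The two branches in the shape \<open>\<lambda>i. r * f i\<close> expected by \<open>ip_scale_left\<close>; the simplifier
  would normalise \<open>apex_dual_def\<close> into another shape.\<close>

lemma apex_dual_apex: "apex_dual u = (\<lambda>i. (1/s) * d i)"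
  unfolding apex_dual_def by simp

lemma apex_dual_vertex: "x \<noteq> u \<Longrightarrow> apex_dual x = (\<lambda>i. g x i + (- \<mu> x / s) * d i)"
  unfolding apex_dual_def by simp

lemma apex_notin: "u \<notin> S"
proof
  assume "u \<in> S"
  then have "ip N d d = 0" using ip_height_vertex_foot[of u] height by simp
  then show False using height_sq height_pos by simp
qed

lemma aff_indep_insert_apex: "aff_indep (insert u S)"
  unfolding aff_indep_def
proof (intro allI impI)
  fix c assume c: "sum c (insert u S) = 0 \<and> lincomb c (insert u S) = (\<lambda>i. 0)"
  have "ip N d (lincomb c (insert u S)) = c u * ip N d u + (\<Sum>z\<in>S. c z * ip N d z)"
    unfolding ip_lincomb_right using finite_S apex_notin by simp
  also have "\<dots> = c u * (ip N d p + s) + (\<Sum>z\<in>S. c z) * ip N d p"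
    using ip_height_vertex_foot height height_sq
    by (simp add: ip_diff_right sum_distrib_right)
  also have "\<dots> = (c u + sum c S) * ip N d p + c u * s" by (simp add: algebra_simps)
  also have "c u + sum c S = 0" using c finite_S apex_notin by simp
  finally have "c u * s = ip N d (lincomb c (insert u S))" by simp
  also have "\<dots> = 0" using c by (simp add: ip_def)
  finally have cu: "c u = 0" using height_pos by simp
  have "sum c S = 0" using c finite_S apex_notin cu by simp
  moreover have "lincomb c S = (\<lambda>i. 0)"
    using c lincomb_insert[OF finite_S apex_notin, of c] cu
    by (metis (no_types, lifting) add_0 mult_zero_left)
  ultimately have "\<forall>a\<in>S. c a = 0" using aff_indep_S unfolding aff_indep_def by blast
  then show "\<forall>a\<in>insert u S. c a = 0" using cu by simp
qed

lemma in_direction_height: "in_direction (insert u S) d"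
proof -
  obtain a0 where a0: "a0 \<in> S" using nonempty_S by blast
  have "in_direction (insert u S) (\<lambda>i. u i - a0 i)"
    using finite_S a0 by (intro in_direction_diff) auto
  moreover have "in_direction S (\<lambda>i. a0 i - p i)"
    unfolding in_direction_def foot
    using vertex_minus_lincomb[OF finite_S a0] sum_vertex_minus_coeffs[OF finite_S a0 bary_sum] by blast
  then have "in_direction (insert u S) (\<lambda>i. a0 i - p i)"
    using in_direction_insert[OF finite_S apex_notin] by blast
  ultimately have "in_direction (insert u S) (\<lambda>i. (u i - a0 i) + (a0 i - p i))"
    by (rule in_direction_add)
  then show ?thesis using height by simp
qed

lemma ip_height_vertex_foot_insert:
  "y \<in> insert u S \<Longrightarrow> ip N d (\<lambda>i. y i - p i) = (if y = u then s else 0)"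
  using ip_height_vertex_foot apex_notin height height_sq by auto

lemma ip_apex_dual_vertex_foot:
  assumes x: "x \<in> insert u S" and y: "y \<in> insert u S"
  shows "ip N (apex_dual x) (\<lambda>i. y i - p i) = (if x = y then 1 else 0) - (if x = u then 0 else \<mu> x)"
proof (cases "x = u")
  case True
  then have "ip N (apex_dual x) (\<lambda>i. y i - p i) = (1/s) * ip N d (\<lambda>i. y i - p i)"
    by (simp only: apex_dual_apex ip_scale_left)
  then show ?thesis
    using True ip_height_vertex_foot_insert[OF y] height_pos by auto
next
  case False
  then have xS: "x \<in> S" using x by simp
  have "ip N (apex_dual x) (\<lambda>i. y i - p i)
      = ip N (g x) (\<lambda>i. y i - p i) + (- \<mu> x / s) * ip N d (\<lambda>i. y i - p i)"
    by (simp only: apex_dual_vertex[OF False] ip_add_left ip_scale_left)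
  moreover have "ip N (g x) (\<lambda>i. u i - p i) = 0"
    using ip_height_dual[OF xS] height ip_commute by metis
  ultimately show ?thesis
    using False y ip_height_vertex_foot_insert[OF y] ip_dual_vertex_foot[OF xS] height_pos
    by auto
qed

lemma dual_family_apex_dual: "dual_family N (insert u S) apex_dual"
  unfolding dual_family_def
proof (intro conjI ballI)
  fix x assume x: "x \<in> insert u S"
  show "in_direction (insert u S) (apex_dual x)"
  proof (cases "x = u")
    case True
    then show ?thesis using in_direction_height by (simp only: apex_dual_apex in_direction_scale)
  next
    case False
    then have "in_direction (insert u S) (g x)"
      using x dual in_direction_insert[OF finite_S apex_notin] unfolding dual_family_def by auto
    then show ?thesis
      using in_direction_height
      by (simp only: apex_dual_vertex[OF False] in_direction_add in_direction_scale)
  qed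
next
  fix x y z assume xyz: "x \<in> insert u S" "y \<in> insert u S" "z \<in> insert u S"
  have "ip N (apex_dual x) (\<lambda>i. y i - z i) = ip N (apex_dual x) (\<lambda>i. (y i - p i) - (z i - p i))"
    by simp
  also have "\<dots> = ip N (apex_dual x) (\<lambda>i. y i - p i) - ip N (apex_dual x) (\<lambda>i. z i - p i)"
    by (rule ip_diff_right)
  finally show "ip N (apex_dual x) (\<lambda>i. y i - z i) = (if x = y then 1 else 0) - (if x = z then 1 else 0)"
    using ip_apex_dual_vertex_foot[OF xyz(1,2)] ip_apex_dual_vertex_foot[OF xyz(1,3)] by simp
qed

lemma ip_apex_dual_apex:
  assumes a: "a \<in> S"
  shows "ip N (apex_dual u) (apex_dual a) = - \<mu> a / s"
proof -
  have "a \<noteq> u" using a apex_notin by blast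
  then have "ip N (apex_dual u) (apex_dual a) = (1/s) * (ip N d (g a) + (- \<mu> a / s) * ip N d d)"
    by (simp only: apex_dual_apex apex_dual_vertex[OF \<open>a \<noteq> u\<close>]
        ip_scale_left ip_add_right ip_scale_right)
  then show ?thesis using ip_height_dual[OF a] height_sq height_pos by simp
qed

lemma ip_apex_dual:
  assumes a: "a \<in> S" and b: "b \<in> S"
  shows "ip N (apex_dual a) (apex_dual b) = ip N (g a) (g b) + \<mu> a * \<mu> b / s"
proof -
  have "a \<noteq> u" "b \<noteq> u" using a b apex_notin by blast+
  then have "ip N (apex_dual a) (apex_dual b)
      = ip N (g a) (g b) + (- \<mu> b / s) * ip N (g a) d
        + (- \<mu> a / s) * (ip N d (g b) + (- \<mu> b / s) * ip N d d)"
    by (simp only: apex_dual_vertex ip_add_left ip_scale_left ip_add_right ip_scale_right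
        not_False_eq_True simp_thms)
  also have "\<dots> = ip N (g a) (g b) + (\<mu> a / s) * (\<mu> b / s) * s"
    using ip_height_dual[OF a] ip_height_dual[OF b] ip_commute[of N "g a" d] height_sq by simp
  also have "\<dots> = ip N (g a) (g b) + \<mu> a * \<mu> b / s"
    using height_pos by (simp add: power2_eq_square)
  finally show ?thesis .
qed

lemma pairwise_obtuse_apex_dual_iff:
  "pairwise_obtuse N (insert u S) apex_dual \<longleftrightarrow>
     (\<forall>a\<in>S. \<mu> a > 0) \<and> (\<forall>a\<in>S. \<forall>b\<in>S. a \<noteq> b \<longrightarrow> ip N (g a) (g b) + \<mu> a * \<mu> b / s < 0)"
proof -
  have apex: "ip N (apex_dual x) (apex_dual y) < 0 \<longleftrightarrow> \<mu> a > 0"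
    if "a \<in> S" "{x, y} = {u, a}" for a x y
  proof -
    have "ip N (apex_dual x) (apex_dual y) = ip N (apex_dual u) (apex_dual a)"
      using that ip_commute by (metis doubleton_eq_iff)
    then show ?thesis using ip_apex_dual_apex[OF that(1)] height_pos by (simp add: zero_less_divide_iff)
  qed
  show ?thesis
    unfolding pairwise_obtuse_def
  proof (intro iffI conjI ballI impI)
    assume obtuse: "\<forall>x\<in>insert u S. \<forall>y\<in>insert u S. x \<noteq> y \<longrightarrow> ip N (apex_dual x) (apex_dual y) < 0"
    show "\<mu> a > 0" if "a \<in> S" for a
      using obtuse apex[OF that, of u a] that apex_notin by auto
    show "ip N (g a) (g b) + \<mu> a * \<mu> b / s < 0" if "a \<in> S" "b \<in> S" "a \<noteq> b" for a b
      using obtuse ip_apex_dual that by auto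
  next
    fix x y
    assume cond: "(\<forall>a\<in>S. \<mu> a > 0) \<and> (\<forall>a\<in>S. \<forall>b\<in>S. a \<noteq> b \<longrightarrow> ip N (g a) (g b) + \<mu> a * \<mu> b / s < 0)"
      and xy: "x \<in> insert u S" "y \<in> insert u S" "x \<noteq> y"
    show "ip N (apex_dual x) (apex_dual y) < 0"
    proof (cases "x = u \<or> y = u")
      case True
      then obtain a where "a \<in> S" "{x, y} = {u, a}" using xy by auto
      then show ?thesis using apex cond by blast
    next
      case False
      then show ?thesis using xy cond ip_apex_dual by auto
    qed
  qed
qed

end

definition acute_apex_cond ::
    "nat \<Rightarrow> (nat \<Rightarrow> real) set \<Rightarrow> ((nat \<Rightarrow> real) \<Rightarrow> nat \<Rightarrow> real) \<Rightarrow> ((nat \<Rightarrow> real) \<Rightarrow> real)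
      \<Rightarrow> real \<Rightarrow> bool" where
  "acute_apex_cond N S g \<mu> s \<longleftrightarrow> s > 0 \<and> (\<forall>a\<in>S. \<mu> a > 0) \<and>
     (\<forall>a\<in>S. \<forall>b\<in>S. a \<noteq> b \<longrightarrow> ip N (g a) (g b) + \<mu> a * \<mu> b / s < 0)"

lemma (in apex_over_simplex) pos_apex_over_simplexI:
  "s > 0 \<Longrightarrow> pos_apex_over_simplex N S g \<mu> u p d s"
  by (rule pos_apex_over_simplex.intro[OF apex_over_simplex_axioms pos_apex_over_simplex_axioms.intro])

lemma (in apex_over_simplex) acute_insert_iff_acute_apex_cond:
  assumes sub: "S \<subseteq> cube01 N" and u: "u \<in> cube01 N"
  shows "u \<notin> S \<and> acute_simplex N (insert u S) \<longleftrightarrow> acute_apex_cond N S g \<mu> s"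
proof -
  have "u \<notin> S \<and> acute_simplex N (insert u S) \<longleftrightarrow> acute_apex_cond N S g \<mu> s" if pos: "s > 0"
  proof -
    interpret pos_apex_over_simplex N S g \<mu> u p d s by (rule pos_apex_over_simplexI[OF pos])
    have "acute_simplex N (insert u S) \<longleftrightarrow> pairwise_obtuse N (insert u S) apex_dual"
      using finite_S sub u
      by (intro acute_simplex_iff_obtuse_dual aff_indep_insert_apex dual_family_apex_dual) auto
    then show ?thesis
      unfolding pairwise_obtuse_apex_dual_iff acute_apex_cond_def using pos apex_notin by blast
  qed
  moreover have "s > 0" if "u \<notin> S" "acute_simplex N (insert u S)"
    using height_pos_if_aff_indep_insert[OF sub u] that unfolding acute_simplex_def by blast
  ultimately show ?thesis unfolding acute_apex_cond_def by blast
qed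

lemma acute_ext_iff_acute_apex_cond:
  assumes acute: "acute_simplex N S" and dual: "dual_family N S g" and u: "u \<in> cube01 N"
    and \<mu>: "sum \<mu> S = 1" and p: "p = lincomb \<mu> S"
    and orth: "\<forall>a\<in>S. \<forall>b\<in>S. ip N (\<lambda>i. u i - p i) (\<lambda>i. a i - b i) = 0"
  shows "u \<in> acute_ext N S \<longleftrightarrow> acute_apex_cond N S g \<mu> (ip N (\<lambda>i. u i - p i) (\<lambda>i. u i - p i))"
proof -
  have S: "finite S" "S \<noteq> {}" "aff_indep S" "S \<subseteq> cube01 N"
    using acute unfolding acute_simplex_def by auto
  interpret apex_over_simplex N S g \<mu> u p "\<lambda>i. u i - p i" "ip N (\<lambda>i. u i - p i) (\<lambda>i. u i - p i)"
    using S dual \<mu> p orth by unfold_locales auto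
  show ?thesis
    using acute_insert_iff_acute_apex_cond[OF S(4) u] u unfolding acute_ext_def by blast
qed

lemma acute_apex_cond_mono:
  assumes "acute_apex_cond N S g \<mu> s" "s \<le> s'"
  shows "acute_apex_cond N S g \<mu> s'"
proof -
  have s: "s > 0" and \<mu>: "\<forall>a\<in>S. \<mu> a > 0" using assms(1) unfolding acute_apex_cond_def by auto
  have "\<mu> a * \<mu> b / s' \<le> \<mu> a * \<mu> b / s" if "a \<in> S" "b \<in> S" for a b
    using \<mu> that s assms(2) by (intro divide_left_mono) (auto intro: mult_nonneg_nonneg less_imp_le)
  then show ?thesis using assms s unfolding acute_apex_cond_def by (smt (verit, best))
qed

text \<open>The Gram entries \<open>\<langle>g a, g b\<rangle>\<close> are negative, so a height beyond
  \<open>\<Sum>\<^sub>a\<^sub>\<noteq>\<^sub>b \<mu> a \<mu> b / -\<langle>g a, g b\<rangle>\<close> makes every perturbed entry negative.\<close>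

lemma acute_apex_cond_exists:
  assumes fin: "finite S" and obtuse: "pairwise_obtuse N S g" and \<mu>: "\<forall>a\<in>S. \<mu> a > 0"
  shows "\<exists>s. acute_apex_cond N S g \<mu> s"
proof -
  define P where "P = {(a, b). a \<in> S \<and> b \<in> S \<and> a \<noteq> b}"
  have "P \<subseteq> S \<times> S" unfolding P_def by auto
  then have "finite P" using fin finite_subset by blast
  define t where "t = (\<lambda>(a, b). \<mu> a * \<mu> b / (- ip N (g a) (g b)))"
  have t: "t x > 0" if "x \<in> P" for x
    using that \<mu> obtuse unfolding P_def t_def pairwise_obtuse_def
    by (auto intro!: divide_pos_neg mult_pos_pos)
  define s where "s = 1 + sum t P"
  have s: "s > 0" unfolding s_def using sum_nonneg[of P t] t by (smt (verit))
  have "ip N (g a) (g b) + \<mu> a * \<mu> b / s < 0" if ab: "a \<in> S" "b \<in> S" "a \<noteq> b" for a b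
  proof -
    define c where "c = - ip N (g a) (g b)"
    have c: "c > 0" using obtuse ab unfolding c_def pairwise_obtuse_def by simp
    have "(a, b) \<in> P" unfolding P_def using ab by simp
    then have "\<mu> a * \<mu> b / c < s"
      using member_le_sum[of "(a, b)" P t] t \<open>finite P\<close> unfolding s_def t_def c_def by fastforce
    then have "\<mu> a * \<mu> b / s < c"
      using c s by (simp add: pos_divide_less_eq mult.commute)
    then show ?thesis unfolding c_def by simp
  qed
  then show ?thesis using s \<mu> unfolding acute_apex_cond_def by blast
qed

section \<open>Feet of perpendiculars\<close>

lemma aff_indep_coeffs_unique:
  assumes "aff_indep S" "sum c S = sum c' S" "lincomb c S = lincomb c' S" "a \<in> S"
  shows "c a = c' a"
proof -
  have "sum (\<lambda>z. c z - c' z) S = 0" "lincomb (\<lambda>z. c z - c' z) S = (\<lambda>i. 0)"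
    using assms(2,3) by (simp_all add: sum_subtractf lincomb_diff)
  then show ?thesis using assms(1,4) unfolding aff_indep_def by fastforce
qed

lemma dual_family_self_pos:
  assumes "dual_family N S g" "a \<in> S" "b \<in> S" "a \<noteq> b"
  shows "ip N (g a) (g a) > 0"
proof -
  have "ip N (g a) (\<lambda>i. a i - b i) = 1" using assms unfolding dual_family_def by auto
  then have "ip N (g a) (g a) \<noteq> 0" using ip_eq_0_if_self_eq_0 by fastforce
  then show ?thesis using ip_self_nonneg[of N "g a"] by linarith
qed

text \<open>The nearest point is characterised by orthogonality; compare \<open>v\<close> with the points
  \<open>p + t (a - b)\<close> of the affine hull for \<open>t = \<langle>v - p, a - b\<rangle> / (|a - b|\<^sup>2 + 1)\<close>.\<close>

lemma proj_aff_orthogonal: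
  assumes proj: "is_proj_aff N S v p" and fin: "finite S" and ab: "a \<in> S" "b \<in> S"
  shows "ip N (\<lambda>i. v i - p i) (\<lambda>i. a i - b i) = 0"
proof -
  define D where "D = (\<lambda>i. v i - p i)"
  define E where "E = (\<lambda>i. a i - b i)"
  define X where "X = ip N D E"
  define Y where "Y = ip N E E"
  define t where "t = X / (Y + 1)"
  have Y0: "Y \<ge> 0" unfolding Y_def by (rule ip_self_nonneg)
  obtain \<mu> where \<mu>: "sum \<mu> S = 1" "p = lincomb \<mu> S"
    using proj unfolding is_proj_aff_def aff_hull_def by blast
  obtain c where c: "sum c S = 0" "E = lincomb c S"
    using in_direction_diff[OF fin ab] unfolding in_direction_def E_def by blast
  define y where "y = lincomb (\<lambda>z. \<mu> z + t * c z) S"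
  have "sum (\<lambda>z. \<mu> z + t * c z) S = 1" using \<mu> c by (simp add: sum.distrib sum_distrib_left[symmetric])
  then have "y \<in> aff_hull S" unfolding aff_hull_def y_def by blast
  have vy: "(\<lambda>i. v i - y i) = (\<lambda>i. D i + (-t) * E i)"
    unfolding y_def lincomb_add_scaled D_def using \<mu> c by auto
  have "sqdist N v p \<le> sqdist N v y" using proj \<open>y \<in> aff_hull S\<close> unfolding is_proj_aff_def by blast
  then have "ip N D D \<le> ip N D D + 2 * (-t) * X + (-t)\<^sup>2 * Y"
    unfolding sqdist_def vy ip_self_add_scaled D_def[symmetric] X_def Y_def .
  then have "0 \<le> (-2 * t * X + t\<^sup>2 * Y) * (Y + 1)\<^sup>2" by simp
  also have "(-2 * t * X + t\<^sup>2 * Y) * (Y + 1)\<^sup>2 = - (X\<^sup>2 * (Y + 2))"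
  proof -
    have tY: "t * (Y + 1) = X" unfolding t_def using Y0 by simp
    have "(-2 * t * X + t\<^sup>2 * Y) * (Y + 1)\<^sup>2 = -2 * X * (t * (Y + 1)) * (Y + 1) + (t * (Y + 1))\<^sup>2 * Y"
      by (simp add: power2_eq_square algebra_simps)
    also have "\<dots> = -2 * X * X * (Y + 1) + X\<^sup>2 * Y" by (simp add: tY)
    also have "\<dots> = - (X\<^sup>2 * (Y + 2))" by (simp add: power2_eq_square algebra_simps)
    finally show ?thesis .
  qed
  finally have "X\<^sup>2 * (Y + 2) \<le> 0" by simp
  then have "X = 0" using Y0 by (simp add: mult_le_0_iff)
  then show ?thesis unfolding X_def D_def E_def .
qed

text \<open>If \<open>\<mu> a \<le> 0\<close>, moving the foot a little against \<open>g a\<close> stays in the affine hull, near \<open>p\<close>,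
  but gives \<open>a\<close> a negative coefficient.\<close>

lemma relint_conv_coeffs_pos:
  assumes fin: "finite S" and ai: "aff_indep S" and dual: "dual_family N S g"
    and \<mu>: "sum \<mu> S = 1" and p: "p = lincomb \<mu> S" and rel: "p \<in> relint_conv N S"
    and a: "a \<in> S"
  shows "\<mu> a > 0"
proof (rule ccontr)
  assume \<mu>a: "\<not> \<mu> a > 0"
  obtain b where b: "b \<in> S" "b \<noteq> a"
    using \<mu> \<mu>a a by (cases "S = {a}") auto
  define q where "q = ip N (g a) (g a)"
  have q: "q > 0" unfolding q_def using dual_family_self_pos[OF dual a b(1)] b(2) by auto
  obtain c where c: "sum c S = 0" "g a = lincomb c S" "c a = q"
    using dual_family_coeffs[OF fin dual a] a unfolding q_def by metis
  obtain e where e: "e > 0" "\<forall>y\<in>aff_hull S. sqdist N y p < e \<longrightarrow> y \<in> conv_hull S"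
    using rel unfolding relint_conv_def by blast
  define t where "t = e / (2 * (q + e))"
  have t: "t > 0" "t < 1" "t * q < e" unfolding t_def using e q
    by (simp_all add: field_simps add_pos_pos mult_pos_pos)
  define cy where "cy = (\<lambda>z. \<mu> z + (-t) * c z)"
  have sy: "sum cy S = 1"
    unfolding cy_def using \<mu> c by (simp add: sum.distrib sum_subtractf sum_distrib_left[symmetric])
  have shift: "(\<lambda>i. lincomb cy S i - p i) = (\<lambda>i. (-t) * g a i)"
    unfolding cy_def lincomb_add_scaled p c(2) by simp
  have "sqdist N (lincomb cy S) p = t * (t * q)"
    unfolding sqdist_def shift q_def ip_scale_left ip_scale_right by simp
  also have "\<dots> < e" using t q by (smt (verit) mult_less_cancel_right2 mult_pos_pos)
  finally have "lincomb cy S \<in> conv_hull S" using e sy unfolding aff_hull_def by blast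
  then obtain c' where c': "\<forall>z\<in>S. c' z \<ge> 0" "sum c' S = 1" "lincomb cy S = lincomb c' S"
    unfolding conv_hull_def by blast
  have "c' a = \<mu> a - t * q"
    using aff_indep_coeffs_unique[OF ai _ c'(3) a] c'(2) sy c(3) unfolding cy_def by simp
  then show False using c'(1) a \<mu>a t(1) q by (smt (verit) mult_pos_pos)
qed

lemma acute_insert_foot:
  assumes acute: "acute_simplex N (insert v S)" and v: "v \<notin> S" and ne: "S \<noteq> {}" and fin: "finite S"
  obtains \<mu> p where "sum \<mu> S = 1" "p = lincomb \<mu> S"
    "\<forall>a\<in>S. \<forall>b\<in>S. ip N (\<lambda>i. v i - p i) (\<lambda>i. a i - b i) = 0"
proof -
  obtain g where dual: "dual_family N (insert v S) g"
    using acute_simplex_obtuse_dual[OF acute] by blast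
  have fin': "finite (insert v S)" using fin by simp
  define q where "q = ip N (g v) (g v)"
  obtain c where c: "sum c (insert v S) = 0" "g v = lincomb c (insert v S)"
    and "\<And>z. z \<in> insert v S \<Longrightarrow> c z = ip N (g z) (g v)"
    using dual_family_coeffs[OF fin' dual, of v] by blast
  then have cv: "c v = q" unfolding q_def by simp
  obtain a where a: "a \<in> S" using ne by blast
  have "v \<noteq> a" using a v by blast
  then have q: "q \<noteq> 0"
    unfolding q_def using dual_family_self_pos[OF dual insertI1 insertI2[OF a]] by simp
  define \<mu> where "\<mu> = (\<lambda>z. - c z / q)"
  define p where "p = lincomb \<mu> S"
  have "sum c S = - q" using c(1) fin v cv by simp
  then have \<mu>: "sum \<mu> S = 1" unfolding \<mu>_def using q by (simp add: sum_divide_distrib[symmetric] sum_negf)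
  have vp: "(\<lambda>i. v i - p i) = (\<lambda>i. (1/q) * g v i)"
  proof
    fix i
    have "g v i = q * v i + lincomb c S i"
      using c(2) lincomb_insert[OF fin v, of c] cv by simp
    moreover have "p i = - lincomb c S i / q" unfolding p_def \<mu>_def lincomb_def
      by (simp add: sum_divide_distrib sum_negf)
    ultimately show "v i - p i = (1/q) * g v i" using q by (simp add: field_simps)
  qed
  have "ip N (\<lambda>i. v i - p i) (\<lambda>i. a i - b i) = 0" if "a \<in> S" "b \<in> S" for a b
    using dual that v unfolding vp ip_scale_left dual_family_def by auto
  with \<mu> p_def that show ?thesis by blast
qed

section \<open>Stacking coordinates\<close>

lemma cube01_mono: "n \<le> N \<Longrightarrow> cube01 n \<subseteq> cube01 N"
  unfolding cube01_def by (auto simp: not_less[symmetric])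

lemma stack_in_cube01: "v \<in> cube01 n \<Longrightarrow> w \<in> cube01 m \<Longrightarrow> stack n v w \<in> cube01 (n + m)"
  unfolding cube01_def stack_def by auto

lemma cube01_add_eq_stack:
  assumes "x \<in> cube01 (n + m)"
  obtains v w where "x = stack n v w" "v \<in> cube01 n" "w \<in> cube01 m"
proof
  show "x = stack n (\<lambda>i. if i < n then x i else 0) (\<lambda>i. if i < m then x (n + i) else 0)"
    using assms unfolding stack_def cube01_def by auto
qed (use assms in \<open>auto simp: cube01_def\<close>)

lemma ip_stack_diff:
  assumes "\<forall>i\<ge>n. y i = 0" "\<forall>i\<ge>n. y' i = 0"
  shows "ip (n + m) (\<lambda>i. stack n v w i - y i) (\<lambda>i. stack n v w i - y' i)
       = ip n (\<lambda>i. v i - y i) (\<lambda>i. v i - y' i) + ip m w w"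
  using assms unfolding ip_def sum_lessThan_add_split by (simp add: stack_def)

lemma aff_hull_vanish: "S \<subseteq> cube01 n \<Longrightarrow> y \<in> aff_hull S \<Longrightarrow> \<forall>i\<ge>n. y i = 0"
  unfolding aff_hull_def using lincomb_vanish by blast

lemma conv_hull_subset_aff_hull: "conv_hull S \<subseteq> aff_hull S"
  unfolding conv_hull_def aff_hull_def by blast

lemma relint_conv_add_dim:
  assumes "S \<subseteq> cube01 n"
  shows "relint_conv (n + m) S = relint_conv n S"
proof -
  have "sqdist (n + m) y p = sqdist n y p" if "y \<in> aff_hull S" "p \<in> conv_hull S" for y p
  proof -
    have "p \<in> aff_hull S" using that(2) conv_hull_subset_aff_hull by blast
    then show ?thesis
      using aff_hull_vanish[OF assms that(1)] aff_hull_vanish[OF assms] unfolding sqdist_def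
      by (intro ip_eq_if_vanish_left) auto
  qed
  then show ?thesis unfolding relint_conv_def by auto
qed

text \<open>The stacked coordinates \<open>w\<close> add the constant \<open>|w|\<^sup>2\<close> to every squared distance to the
  affine hull, so they do not move the projection.\<close>

lemma is_proj_aff_stack_iff:
  assumes "S \<subseteq> cube01 n"
  shows "is_proj_aff (n + m) S (stack n v w) p \<longleftrightarrow> is_proj_aff n S v p"
proof -
  have "sqdist (n + m) (stack n v w) y = sqdist n v y + ip m w w" if "y \<in> aff_hull S" for y
    unfolding sqdist_def using ip_stack_diff aff_hull_vanish[OF assms that] by blast
  then show ?thesis unfolding is_proj_aff_def by auto
qed

lemma cand_ext_stack:
  assumes "S \<subseteq> cube01 n"
  shows "cand_ext (n + m) S = {stack n v w | v w. v \<in> cand_ext n S \<and> w \<in> cube01 m}"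
proof (intro set_eqI iffI)
  fix x assume x: "x \<in> cand_ext (n + m) S"
  then obtain v w where vw: "x = stack n v w" "v \<in> cube01 n" "w \<in> cube01 m"
    using cube01_add_eq_stack unfolding cand_ext_def by blast
  then have "v \<in> cand_ext n S"
    using x is_proj_aff_stack_iff[OF assms] relint_conv_add_dim[OF assms] unfolding cand_ext_def by auto
  then show "x \<in> {stack n v w | v w. v \<in> cand_ext n S \<and> w \<in> cube01 m}" using vw by blast
next
  fix x assume "x \<in> {stack n v w | v w. v \<in> cand_ext n S \<and> w \<in> cube01 m}"
  then show "x \<in> cand_ext (n + m) S"
    using is_proj_aff_stack_iff[OF assms] relint_conv_add_dim[OF assms] stack_in_cube01
    unfolding cand_ext_def by auto
qed

lemma dual_family_ip_add_dim:
  assumes "S \<subseteq> cube01 n" "n \<le> N" "dual_family n S g" "a \<in> S"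
  shows "ip N (g a) y = ip n (g a) y"
proof -
  have "in_direction S (g a)" using assms(3,4) unfolding dual_family_def by blast
  then show ?thesis
    using in_direction_vanish[OF _ assms(1)] ip_eq_if_vanish_left[OF _ assms(2)] by blast
qed

lemma dual_family_add_dim:
  assumes "S \<subseteq> cube01 n" "n \<le> N" "dual_family n S g"
  shows "dual_family N S g"
  using assms(3) dual_family_ip_add_dim[OF assms] unfolding dual_family_def by simp

lemma acute_apex_cond_add_dim:
  assumes "S \<subseteq> cube01 n" "n \<le> N" "dual_family n S g"
  shows "acute_apex_cond N S g \<mu> s = acute_apex_cond n S g \<mu> s"
  using dual_family_ip_add_dim[OF assms] unfolding acute_apex_cond_def by simp

lemma acute_simplex_add_dim:
  assumes acute: "acute_simplex n S" and le: "n \<le> N"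
  shows "acute_simplex N S"
proof -
  have S: "finite S" "S \<noteq> {}" "aff_indep S" "S \<subseteq> cube01 n"
    using acute unfolding acute_simplex_def by auto
  obtain g where dual: "dual_family n S g" and obtuse: "pairwise_obtuse n S g"
    using acute_simplex_obtuse_dual[OF acute] by blast
  have "pairwise_obtuse N S g"
    using obtuse dual_family_ip_add_dim[OF S(4) le dual] unfolding pairwise_obtuse_def by simp
  then show ?thesis
    using S cube01_mono[OF le] dual_family_add_dim[OF S(4) le dual]
    by (intro obtuse_dual_imp_acute_simplex) auto
qed

lemma stack_acute_ext_iff:
  assumes acute: "acute_simplex n S" and dual: "dual_family n S g" and v: "v \<in> cube01 n"
    and \<mu>: "sum \<mu> S = 1" and p: "p = lincomb \<mu> S"
    and orth: "\<forall>a\<in>S. \<forall>b\<in>S. ip n (\<lambda>i. v i - p i) (\<lambda>i. a i - b i) = 0"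
    and w: "w \<in> cube01 m"
  shows "stack n v w \<in> acute_ext (n + m) S \<longleftrightarrow>
    acute_apex_cond n S g \<mu> (ip n (\<lambda>i. v i - p i) (\<lambda>i. v i - p i) + ip m w w)"
proof -
  have sub: "S \<subseteq> cube01 n" using acute unfolding acute_simplex_def by blast
  have le: "n \<le> n + m" by simp
  have acute': "acute_simplex (n + m) S" using acute_simplex_add_dim[OF acute le] .
  have p_vanish: "\<forall>i\<ge>n. p i = 0" using lincomb_vanish[OF sub] p by simp
  have "ip (n + m) (\<lambda>i. stack n v w i - p i) (\<lambda>i. a i - b i) = 0" if "a \<in> S" "b \<in> S" for a b
  proof -
    have "a \<in> cube01 n" "b \<in> cube01 n" using that sub by auto
    then have "\<forall>i\<ge>n. a i - b i = 0" unfolding cube01_def by simp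
    then have "ip (n + m) (\<lambda>i. stack n v w i - p i) (\<lambda>i. a i - b i)
        = ip n (\<lambda>i. stack n v w i - p i) (\<lambda>i. a i - b i)"
      by (rule ip_eq_if_vanish_right[OF _ le])
    also have "\<dots> = ip n (\<lambda>i. v i - p i) (\<lambda>i. a i - b i)"
      unfolding ip_def by (intro sum.cong) (auto simp: stack_def)
    finally show ?thesis using orth that by simp
  qed
  then show ?thesis
    using acute_ext_iff_acute_apex_cond[OF acute' dual_family_add_dim[OF sub le dual]
        stack_in_cube01[OF v w] \<mu> p]
    unfolding ip_stack_diff[OF p_vanish p_vanish] acute_apex_cond_add_dim[OF sub le dual] by blast
qed

lemma acute_ext_stack_superset:
  assumes acute: "acute_simplex n S" and v: "v \<in> acute_ext n S" and w: "w \<in> cube01 m"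
  shows "stack n v w \<in> acute_ext (n + m) S"
proof -
  have S: "finite S" "S \<noteq> {}" using acute unfolding acute_simplex_def by auto
  have vc: "v \<in> cube01 n" and vS: "v \<notin> S" and acute_v: "acute_simplex n (insert v S)"
    using v unfolding acute_ext_def by auto
  obtain g where dual: "dual_family n S g" using acute_simplex_obtuse_dual[OF acute] by blast
  obtain \<mu> p where \<mu>: "sum \<mu> S = 1" and p: "p = lincomb \<mu> S"
    and orth: "\<forall>a\<in>S. \<forall>b\<in>S. ip n (\<lambda>i. v i - p i) (\<lambda>i. a i - b i) = 0"
    using acute_insert_foot[OF acute_v vS S(2,1)] by blast
  have "acute_apex_cond n S g \<mu> (ip n (\<lambda>i. v i - p i) (\<lambda>i. v i - p i))"
    using acute_ext_iff_acute_apex_cond[OF acute dual vc \<mu> p orth] v by blast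
  then have "acute_apex_cond n S g \<mu> (ip n (\<lambda>i. v i - p i) (\<lambda>i. v i - p i) + ip m w w)"
    using acute_apex_cond_mono ip_self_nonneg[of m w] by simp
  then show ?thesis using stack_acute_ext_iff[OF acute dual vc \<mu> p orth w] by blast
qed

text \<open>The threshold is the least natural number \<open>k\<close> for which a squared height of
  \<open>|v - p|\<^sup>2 + k\<close> satisfies the criterion; \<open>|w|\<^sup>2\<close> is a natural number.\<close>

lemma acute_ext_stack_threshold:
  assumes acute: "acute_simplex n S" and v: "v \<in> cand_ext n S"
  shows "\<exists>l::nat. \<forall>m. \<forall>w\<in>cube01 m. ip m w w \<ge> l \<longleftrightarrow> stack n v w \<in> acute_ext (n + m) S"
proof -
  have S: "finite S" "aff_indep S" using acute unfolding acute_simplex_def by auto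
  obtain g where dual: "dual_family n S g" and obtuse: "pairwise_obtuse n S g"
    using acute_simplex_obtuse_dual[OF acute] by blast
  obtain p where vc: "v \<in> cube01 n" and proj: "is_proj_aff n S v p" and rel: "p \<in> relint_conv n S"
    using v unfolding cand_ext_def by blast
  obtain \<mu> where \<mu>: "sum \<mu> S = 1" and p: "p = lincomb \<mu> S"
    using proj unfolding is_proj_aff_def aff_hull_def by blast
  have orth: "\<forall>a\<in>S. \<forall>b\<in>S. ip n (\<lambda>i. v i - p i) (\<lambda>i. a i - b i) = 0"
    using proj_aff_orthogonal[OF proj S(1)] by blast
  have \<mu>_pos: "\<forall>a\<in>S. \<mu> a > 0" using relint_conv_coeffs_pos[OF S dual \<mu> p rel] by blast
  define cond where "cond k \<longleftrightarrow> acute_apex_cond n S g \<mu> (ip n (\<lambda>i. v i - p i) (\<lambda>i. v i - p i) + real k)"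
    for k :: nat
  obtain s where s: "acute_apex_cond n S g \<mu> s"
    using acute_apex_cond_exists[OF S(1) obtuse \<mu>_pos] by blast
  have "s \<le> ip n (\<lambda>i. v i - p i) (\<lambda>i. v i - p i) + real (nat \<lceil>s\<rceil>)"
    using ip_self_nonneg[of n "\<lambda>i. v i - p i"] by linarith
  then have "cond (nat \<lceil>s\<rceil>)" unfolding cond_def by (rule acute_apex_cond_mono[OF s])
  then have least: "cond (LEAST k. cond k)" by (rule LeastI)
  have "\<forall>m. \<forall>w\<in>cube01 m. ip m w w \<ge> (LEAST k. cond k) \<longleftrightarrow> stack n v w \<in> acute_ext (n + m) S"
  proof (intro allI ballI)
    fix m w assume w: "w \<in> cube01 m"
    have "\<forall>i<m. w i = 0 \<or> w i = 1" using w by (simp add: cube01_def)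
    then obtain k where k: "ip m w w = real k" using ip_self_binary_nat by blast
    have "stack n v w \<in> acute_ext (n + m) S \<longleftrightarrow> cond k"
      using stack_acute_ext_iff[OF acute dual vc \<mu> p orth w] k unfolding cond_def by simp
    moreover have "cond k \<longleftrightarrow> (LEAST k. cond k) \<le> k"
    proof
      assume "(LEAST k. cond k) \<le> k"
      then have "ip n (\<lambda>i. v i - p i) (\<lambda>i. v i - p i) + real (LEAST k. cond k)
          \<le> ip n (\<lambda>i. v i - p i) (\<lambda>i. v i - p i) + real k" by simp
      then show "cond k" using least unfolding cond_def by (rule acute_apex_cond_mono[rotated])
    qed (rule Least_le)
    ultimately show "ip m w w \<ge> (LEAST k. cond k) \<longleftrightarrow> stack n v w \<in> acute_ext (n + m) S"
      using k by simp
  qed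
  then show ?thesis by (rule exI)
qed

theorem theorem5p11:
  fixes n m :: nat and S :: "(nat \<Rightarrow> real) set"
  assumes "acute_simplex n S" and "card S \<le> n" and "m \<ge> 1"
  shows "cand_ext (n + m) S = {stack n v w | v w. v \<in> cand_ext n S \<and> w \<in> cube01 m}
    \<and> acute_ext (n + m) S \<supseteq> {stack n v w | v w. v \<in> acute_ext n S \<and> w \<in> cube01 m}
    \<and> (\<forall>v\<in>cand_ext n S. \<exists>l::int. \<forall>m'\<ge>1. \<forall>w\<in>cube01 m'.
           (ip m' w w \<ge> of_int l \<longleftrightarrow> stack n v w \<in> acute_ext (n + m') S))"
proof (intro conjI subsetI ballI)
  show "cand_ext (n + m) S = {stack n v w | v w. v \<in> cand_ext n S \<and> w \<in> cube01 m}"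
    using assms(1) cand_ext_stack unfolding acute_simplex_def by blast
next
  fix x assume "x \<in> {stack n v w | v w. v \<in> acute_ext n S \<and> w \<in> cube01 m}"
  then show "x \<in> acute_ext (n + m) S" using acute_ext_stack_superset[OF assms(1)] by blast
next
  fix v assume v: "v \<in> cand_ext n S"
  obtain l :: nat where
    l: "\<forall>m. \<forall>w\<in>cube01 m. ip m w w \<ge> l \<longleftrightarrow> stack n v w \<in> acute_ext (n + m) S"
    using acute_ext_stack_threshold[OF assms(1) v] by blast
  show "\<exists>l::int. \<forall>m'\<ge>1. \<forall>w\<in>cube01 m'.
      (ip m' w w \<ge> of_int l \<longleftrightarrow> stack n v w \<in> acute_ext (n + m') S)"
    using l by (intro exI[of _ "int l"] allI impI ballI) simp
qed

end
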